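(* Let $p\in\mathbb{N}$, $\eta>0$ and write $x=\cosh\eta$. Then \[ \sum_{k=-p}^{p-1}\frac{(-1)^{k+1}e^{k\eta}R_p^k(x)}{p-k} =p!\,e^{p\eta}\sinh^p\eta\left\{\frac{(-1)^p}{(2p)!}\bigl[\psi(2p+1)-\psi(1)\bigr]P_p^p(\coth\eta)+\sum_{k=0}^{p-1}\frac{(-1)^k(2k+1)}{(p-k)(p+k+1)}P_k^{-p}(\coth\eta)\right\}. \]
   Context: $\psi$ is the digamma function. For $z>1$, $P_p^p(z)=(z^2-1)^{p/2}\frac{d^p}{dz^p}P_p(z)$ with $P_p$ the Legendre polynomial; for integers $k\ge0$, $m\ge1$, $P_k^{-m}(z)=\frac{1}{m!}\left(\frac{z-1}{z+1}\right)^{m/2}{}_2F_1\!\left(-k,k+1;1+m;\frac{1-z}{2}\right)$. The logarithmic polynomials $R_p^k(x)$, $p\in\mathbb{N}_0$, $k\in\mathbb{Z}$, are defined by $R_0^0(x)=1$, $R_0^k(x)=0$ for $k\ne0$, and $R_p^k(x)=\tfrac12 R_{p-1}^{k-1}(x)+xR_{p-1}^k(x)+\tfrac12 R_{p-1}^{k+1}(x)$ for $p\ge1$. *)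

theory Defs
  imports "HOL-Analysis.Analysis" "HOL-Computational_Algebra.Polynomial"
begin

definition legendre_poly :: "nat \<Rightarrow> real poly" where
  "legendre_poly n = smult (1 / 2 ^ n)
     (\<Sum>j\<le>n div 2. monom ((-1) ^ j * real (n choose j) * real ((2*n - 2*j) choose n)) (n - 2*j))"

definition assoc_legendre_pp :: "nat \<Rightarrow> real \<Rightarrow> real" where
  "assoc_legendre_pp p z = (z^2 - 1) powr (real p / 2) * poly ((pderiv ^^ p) (legendre_poly p)) z"

definition hyp2F1_term :: "nat \<Rightarrow> real \<Rightarrow> real \<Rightarrow> real \<Rightarrow> real" where
  "hyp2F1_term k b c w =
     (\<Sum>j\<le>k. pochhammer (- real k) j * pochhammer b j / (pochhammer c j * fact j) * w ^ j)"

definition assoc_legendre_neg :: "nat \<Rightarrow> nat \<Rightarrow> real \<Rightarrow> real" where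
  "assoc_legendre_neg k m z = 1 / fact m * ((z - 1) / (z + 1)) powr (real m / 2)
     * hyp2F1_term k (real k + 1) (1 + real m) ((1 - z) / 2)"

fun logR :: "nat \<Rightarrow> int \<Rightarrow> real \<Rightarrow> real" where
  "logR 0 k x = (if k = 0 then 1 else 0)"
| "logR (Suc p) k x = logR p (k - 1) x / 2 + x * logR p k x + logR p (k + 1) x / 2"

end

theory Submission
  imports Defs
begin

text \<open>Put \<open>s = exp (2\<eta>) - 1\<close> and let \<open>H n\<close> denote the harmonic numbers, so that
  \<open>\<psi>(2p+1) - \<psi>(1) = H (2p)\<close>. Both sides equal \<open>2^-p exp (-p\<eta>) (-1)^p \<Sum>m\<le>p. C(p,m) H(2p-m) s^m\<close>.

  On the left, the generating function \<open>\<Sum>k. R p k (cosh \<eta>) z^k = (2z)^-p (1 + z e^\<eta>)^p (1 + z e^-\<eta>)^p\<close>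
  writes \<open>R p k (cosh \<eta>)\<close> as a double binomial sum; after exchanging summations, Vandermonde's identity
  and \<open>\<Sum>j=1..N. (-1)^j C(N,j) / j = - H N\<close> collapse the coefficients.

  On the right, \<open>P p p (coth \<eta>) = (2p)! / (2^p p!) / sinh^p \<eta>\<close>, and \<open>s^p P k (-p) (coth \<eta>)\<close>
  is \<open>exp (-p\<eta>) / p!\<close> times a polynomial in \<open>s\<close> (the hypergeometric series at \<open>-1/s\<close>)
  whose coefficient of \<open>s^(p-j)\<close> is a multiple of \<open>(-k)\<^sub>j (k+1)\<^sub>j\<close>.
  Against the weights \<open>(-1)^k (2k+1) / ((p-k)(p+k+1))\<close> these products telescope in \<open>k\<close>, leaving a
  difference of harmonic numbers.\<close>

section \<open>Hypergeometric numerators and Legendre weights\<close>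

definition hyper_numer :: "nat \<Rightarrow> real \<Rightarrow> real" where
  "hyper_numer j x = (-1)^j * pochhammer (-x) j * pochhammer (x + 1) j"

lemma hyper_numer_0 [simp]: "hyper_numer 0 x = 1"
  by (simp add: hyper_numer_def)

lemma hyper_numer_Suc: "hyper_numer (Suc j) x = hyper_numer j x * ((x - real j) * (x + 1 + real j))"
  by (simp add: hyper_numer_def pochhammer_rec' algebra_simps)

lemma hyper_numer_of_nat_eq_0: "n < j \<Longrightarrow> hyper_numer j (real n) = 0"
  by (simp add: hyper_numer_def pochhammer_of_nat_eq_0_iff)

lemma hyper_numer_shift: "hyper_numer j (x + 1) * (x + 1 - real j) = hyper_numer j x * (x + 1 + real j)"
proof (induction j)
  case (Suc j)
  have "hyper_numer (Suc j) (x + 1) * (x + 1 - real (Suc j))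
      = (hyper_numer j (x + 1) * (x + 1 - real j)) * (x + 2 + real j) * (x - real j)"
    by (simp add: hyper_numer_Suc algebra_simps)
  also have "\<dots> = hyper_numer j x * (x + 1 + real j) * (x + 2 + real j) * (x - real j)"
    using Suc by simp
  also have "\<dots> = hyper_numer (Suc j) x * (x + 1 + real (Suc j))"
    by (simp add: hyper_numer_Suc algebra_simps)
  finally show ?case .
qed simp

lemma sum_alternating_hyper_numer:
  "(\<Sum>k<n. (-1)^k * (2 * real k + 1) * hyper_numer j (real k))
     = (-1)^(n+1) * hyper_numer j (real n) * (real n - real j)"
proof (induction n)
  case 0
  then show ?case using hyper_numer_of_nat_eq_0[of 0 j] by (cases j) auto
next
  case (Suc n)
  then show ?case using hyper_numer_shift[of j "real n"] by (simp add: algebra_simps)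
qed

lemma sum_alternating_inverse: "(\<Sum>i\<in>{1..2*p}. (-1)^i / real i) = harm p - harm (2*p)"
proof (induction p)
  case (Suc p)
  have "{1..2 * Suc p} = insert (2*p+2) (insert (2*p+1) {1..2*p})" by auto
  then have "(\<Sum>i\<in>{1..2 * Suc p}. (-1)^i / real i)
      = (\<Sum>i\<in>{1..2*p}. (-1)^i / real i) - 1 / (2 * real p + 1) + 1 / (2 * real p + 2)"
    by (simp add: algebra_simps)
  moreover have "harm (2 * Suc p) = harm (2*p) + 1 / (2 * real p + 1) + 1 / (2 * real p + 2)"
    by (simp add: harm_Suc inverse_eq_divide algebra_simps)
  moreover have "harm (Suc p) = harm p + 1 / (2 * real p + 2) + 1 / (2 * real p + 2)"
    by (simp add: harm_Suc inverse_eq_divide field_simps)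
  ultimately show ?case using Suc by linarith
qed (simp add: harm_def)

definition legendre_weight :: "nat \<Rightarrow> nat \<Rightarrow> real" where
  "legendre_weight p k = (-1)^k * real (2*k + 1) / (real (p - k) * real (p + k + 1))"

lemma sum_legendre_weight: "(\<Sum>k<p. legendre_weight p k) = (-1)^(p+1) * (harm (2*p) - harm p)"
proof -
  have partial_fractions: "legendre_weight p k = (-1)^k / real (p - k) - (-1)^k / real (p + k + 1)"
    if "k < p" for k
    using that by (simp add: legendre_weight_def field_simps of_nat_diff)
  have lower: "(\<Sum>k<p. (-1)^k / real (p - k)) = (\<Sum>i\<in>{1..p}. (-1)^p * ((-1)^i / real i))"
    by (rule sum.reindex_bij_witness[where i="\<lambda>i. p - i" and j="\<lambda>k. p - k"])
       (auto simp: power_diff minus_one_power_iff)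
  have upper: "(\<Sum>k<p. (-1)^k / real (p + k + 1)) = (\<Sum>i\<in>{p+1..2*p}. - ((-1)^p * ((-1)^i / real i)))"
    by (rule sum.reindex_bij_witness[where i="\<lambda>i. i - p - 1" and j="\<lambda>k. p + k + 1"])
       (auto simp: minus_one_power_iff)
  have "{1..2*p} = {1..p} \<union> {p+1..2*p}" by auto
  then have split: "(\<Sum>i\<in>{1..2*p}. (-1)^i / real i)
      = (\<Sum>i\<in>{1..p}. (-1)^i / real i) + (\<Sum>i\<in>{p+1..2*p}. (-1)^i / real i)"
    by (simp add: sum.union_disjoint)
  have "(\<Sum>k<p. legendre_weight p k) = (\<Sum>k<p. (-1)^k / real (p - k)) - (\<Sum>k<p. (-1)^k / real (p + k + 1))"
    by (simp add: partial_fractions sum_subtractf[symmetric])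
  also have "\<dots> = (-1)^p * (\<Sum>i\<in>{1..2*p}. (-1)^i / real i)"
    unfolding lower upper split by (simp add: sum_distrib_left sum_negf algebra_simps)
  also have "\<dots> = (-1)^(p+1) * (harm (2*p) - harm p)"
    unfolding sum_alternating_inverse by (simp add: algebra_simps)
  finally show ?thesis .
qed

lemma sum_legendre_weight_hyper_numer:
  "(\<Sum>k<p. legendre_weight p k * hyper_numer j (real k))
     = (-1)^(p+1) * hyper_numer j (real p) * (harm (2*p) - harm (p + j))"
proof (induction j)
  case 0
  then show ?case by (simp add: sum_legendre_weight)
next
  case (Suc j)
  define P where "P = (real p - real j) * (real p + 1 + real j)"
  have step: "legendre_weight p k * hyper_numer (Suc j) (real k)
      = P * (legendre_weight p k * hyper_numer j (real k)) - (-1)^k * (2 * real k + 1) * hyper_numer j (real k)"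
    if "k < p" for k
  proof -
    define D where "D = real (p - k) * real (p + k + 1)"
    have factor: "(real k - real j) * (real k + 1 + real j) = P - D"
      using that by (simp add: P_def D_def of_nat_diff algebra_simps)
    have weight: "legendre_weight p k * D = (-1)^k * (2 * real k + 1)"
      using that by (simp add: legendre_weight_def D_def)
    have "legendre_weight p k * hyper_numer (Suc j) (real k)
        = P * (legendre_weight p k * hyper_numer j (real k)) - (legendre_weight p k * D) * hyper_numer j (real k)"
      unfolding hyper_numer_Suc factor by (simp add: algebra_simps)
    then show ?thesis unfolding weight .
  qed
  have "(\<Sum>k<p. legendre_weight p k * hyper_numer (Suc j) (real k))
      = P * (\<Sum>k<p. legendre_weight p k * hyper_numer j (real k))
        - (\<Sum>k<p. (-1)^k * (2 * real k + 1) * hyper_numer j (real k))"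
    by (simp add: step sum_distrib_left sum_subtractf[symmetric])
  also have "\<dots> = (-1)^(p+1) * hyper_numer (Suc j) (real p) * (harm (2*p) - harm (p + Suc j))"
    unfolding Suc sum_alternating_hyper_numer P_def by (simp add: hyper_numer_Suc harm_Suc field_simps)
  finally show ?case .
qed

lemma hyper_numer_of_nat_div:
  assumes "j \<le> p"
  shows "hyper_numer j (real p) / (pochhammer (1 + real p) j * fact j) = real (p choose j)"
proof -
  have "pochhammer (1 + real p) j \<noteq> 0" by (simp add: pochhammer_eq_0_iff)
  moreover have "real (p choose j) = (-1)^j * pochhammer (- real p) j / fact j"
    by (simp add: binomial_gbinomial gbinomial_pochhammer)
  ultimately show ?thesis unfolding hyper_numer_def by (simp add: field_simps add.commute)
qed

section \<open>Binomial sums and harmonic numbers\<close>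

definition int_choose :: "nat \<Rightarrow> int \<Rightarrow> real" where
  "int_choose n m = (if 0 \<le> m \<and> m \<le> int n then real (n choose nat m) else 0)"

lemma int_choose_of_nat [simp]: "int_choose n (int k) = real (n choose k)"
  by (auto simp: int_choose_def binomial_eq_0)

lemma int_choose_neg: "m < 0 \<Longrightarrow> int_choose n m = 0"
  by (simp add: int_choose_def)

lemma int_choose_Suc: "int_choose (Suc n) m = int_choose n m + int_choose n (m - 1)"
proof (cases "m < 1")
  case True
  then show ?thesis by (cases "m = 0") (simp_all add: int_choose_def)
next
  case False
  then have "m = int (Suc (nat (m - 1)))" by simp
  then obtain i where m: "m = int (Suc i)" by blast
  have "int (Suc i) - 1 = int i" by simp
  then show ?thesis unfolding m by (simp only: int_choose_of_nat) simp
qed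

lemma vandermonde_int_choose:
  "(\<Sum>i\<le>n. real (n choose i) * int_choose q (int r - int i)) = real ((n + q) choose r)"
proof -
  have "(\<Sum>i\<le>n. real (n choose i) * int_choose q (int r - int i))
      = (\<Sum>i\<le>n + r. real (n choose i) * int_choose q (int r - int i))"
    by (intro sum.mono_neutral_left) (simp_all add: binomial_eq_0)
  also have "\<dots> = (\<Sum>i\<le>r. real (n choose i) * int_choose q (int r - int i))"
    by (intro sum.mono_neutral_right) (auto intro: int_choose_neg)
  also have "\<dots> = (\<Sum>i\<le>r. real (n choose i) * real (q choose (r - i)))"
  proof (intro sum.cong refl)
    fix i assume "i \<in> {..r}"
    then have "int r - int i = int (r - i)" by simp
    then show "real (n choose i) * int_choose q (int r - int i) = real (n choose i) * real (q choose (r - i))"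
      by (simp only: int_choose_of_nat)
  qed
  also have "\<dots> = real ((n + q) choose r)"
    unfolding vandermonde[symmetric] by simp
  finally show ?thesis .
qed

lemma sum_alternating_choose_Suc: "(\<Sum>j\<in>{1..Suc N}. (-1)^j * real (Suc N choose j)) = -1"
proof -
  have "(\<Sum>j\<le>Suc N. (-1)^j * real (Suc N choose j)) = 0"
    by (rule choose_alternating_sum) simp
  then show ?thesis by (simp add: atMost_atLeast0 sum.atLeast_Suc_atMost)
qed

lemma sum_alternating_choose_div: "(\<Sum>j\<in>{1..N}. (-1)^j * real (N choose j) / real j) = - harm N"
proof (induction N)
  case (Suc N)
  have absorb: "real (N choose (j - 1)) / real j = real (Suc N choose j) / real (Suc N)" if "j \<ge> 1" for j
  proof -
    obtain i where "j = Suc i" using \<open>j \<ge> 1\<close> by (cases j) auto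
    moreover have "real (Suc N choose Suc i) * real (Suc i) = real (Suc N) * real (N choose i)"
      by (metis Suc_times_binomial_eq mult.commute of_nat_mult)
    ultimately show ?thesis by (simp add: field_simps)
  qed
  have pascal: "(-1)^j * real (Suc N choose j) / real j
      = (-1)^j * real (N choose j) / real j + (-1)^j * real (N choose (j - 1)) / real j"
    if "j \<ge> 1" for j
    using that by (cases j) (simp_all add: add_divide_distrib diff_divide_distrib ring_distribs)
  have "(\<Sum>j\<in>{1..Suc N}. (-1)^j * real (N choose (j - 1)) / real j)
      = (\<Sum>j\<in>{1..Suc N}. (-1)^j * real (Suc N choose j)) / real (Suc N)"
    unfolding sum_divide_distrib by (intro sum.cong refl) (metis absorb atLeastAtMost_iff times_divide_eq_right)
  also have "\<dots> = - 1 / real (Suc N)"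
    unfolding sum_alternating_choose_Suc ..
  finally have shifted: "(\<Sum>j\<in>{1..Suc N}. (-1)^j * real (N choose (j - 1)) / real j) = - 1 / real (Suc N)" .
  moreover have "(\<Sum>j\<in>{1..Suc N}. (-1)^j * real (N choose j) / real j)
      = (\<Sum>j\<in>{1..N}. (-1)^j * real (N choose j) / real j)"
    by simp
  ultimately show ?case
    using Suc by (simp add: pascal sum.distrib harm_Suc inverse_eq_divide)
qed (simp add: harm_def)

lemma sum_alternating_choose_div_le:
  assumes "N \<le> M"
  shows "(\<Sum>j\<in>{1..M}. (-1)^j * real (N choose j) / real j) = - harm N"
proof -
  have "(\<Sum>j\<in>{1..M}. (-1)^j * real (N choose j) / real j) = (\<Sum>j\<in>{1..N}. (-1)^j * real (N choose j) / real j)"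
    using assms by (intro sum.mono_neutral_right) auto
  then show ?thesis by (simp only: sum_alternating_choose_div)
qed

lemma choose_mult_swap:
  assumes "i \<le> p" "m \<le> p"
  shows "(p choose i) * ((p - i) choose m) = (p choose m) * ((p - m) choose i)"
proof (cases "m \<le> p - i")
  case True
  then have "(p choose (p - i)) * ((p - i) choose m) = (p choose m) * ((p - m) choose (p - i - m))"
    using choose_mult[of m "p - i" p] by simp
  moreover have "p choose (p - i) = p choose i"
    using assms by (simp add: binomial_symmetric[symmetric])
  moreover have "(p - m) choose (p - i - m) = (p - m) choose i"
    using assms True by (metis binomial_symmetric diff_commute le_diff_conv2 add.commute)
  ultimately show ?thesis by simp
next
  case False
  then have "p - m < i" using assms by arith
  then show ?thesis using False by (simp add: binomial_eq_0)
qed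

lemma binomial_ring_atMost:
  assumes "n \<le> p"
  shows "(1 + s :: real)^n = (\<Sum>m\<le>p. real (n choose m) * s^m)"
proof -
  have "(1 + s)^n = (s + 1)^n" by (simp add: add.commute)
  also have "\<dots> = (\<Sum>m\<le>n. real (n choose m) * s^m)"
    by (simp add: binomial_ring)
  also have "\<dots> = (\<Sum>m\<le>p. real (n choose m) * s^m)"
    using assms by (intro sum.mono_neutral_left) (auto simp: binomial_eq_0)
  finally show ?thesis .
qed

lemma sum_choose_Suc_weighted:
  "(\<Sum>i\<le>Suc n. real (Suc n choose i) * X i) = (\<Sum>i\<le>n. real (n choose i) * (X i + X (Suc i)))"
proof -
  have "(\<Sum>i\<le>Suc n. real (Suc n choose i) * X i) = X 0 + (\<Sum>i\<le>n. real (Suc n choose Suc i) * X (Suc i))"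
    by (subst sum.atMost_Suc_shift) simp
  moreover have "(\<Sum>i\<le>n. real (Suc n choose Suc i) * X (Suc i))
      = (\<Sum>i\<le>n. real (n choose i) * X (Suc i)) + (\<Sum>i\<le>n. real (n choose Suc i) * X (Suc i))"
    by (simp add: sum.distrib[symmetric] algebra_simps)
  moreover have "X 0 + (\<Sum>i\<le>n. real (n choose Suc i) * X (Suc i)) = (\<Sum>i\<le>Suc n. real (n choose i) * X i)"
    by (subst sum.atMost_Suc_shift) simp
  ultimately show ?thesis by (simp add: sum.distrib algebra_simps)
qed

section \<open>The left-hand side\<close>

definition logR_cosh_term :: "real \<Rightarrow> nat \<Rightarrow> int \<Rightarrow> nat \<Rightarrow> real" where
  "logR_cosh_term \<eta> p k i = int_choose p (int p - k - int i) * exp (real_of_int (int p - k - 2 * int i) * \<eta>)"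

lemma logR_cosh_term_Suc:
  "logR_cosh_term \<eta> (Suc p) k i + logR_cosh_term \<eta> (Suc p) k (Suc i)
    = logR_cosh_term \<eta> p (k - 1) i + 2 * cosh \<eta> * logR_cosh_term \<eta> p k i + logR_cosh_term \<eta> p (k + 1) i"
proof -
  define e where "e = exp (real_of_int (int p - k - 2 * int i) * \<eta>)"
  have "exp (real_of_int (int (Suc p) - k - 2 * int i) * \<eta>) = e * exp \<eta>"
      "exp (real_of_int (int (Suc p) - k - 2 * int (Suc i)) * \<eta>) = e * exp (-\<eta>)"
      "exp (real_of_int (int p - (k - 1) - 2 * int i) * \<eta>) = e * exp \<eta>"
      "exp (real_of_int (int p - (k + 1) - 2 * int i) * \<eta>) = e * exp (-\<eta>)"
    unfolding e_def exp_add[symmetric] by (simp_all add: algebra_simps)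
  moreover have "int_choose (Suc p) (int (Suc p) - k - int i)
        = int_choose p (int p - (k - 1) - int i) + int_choose p (int p - k - int i)"
      "int_choose (Suc p) (int (Suc p) - k - int (Suc i))
        = int_choose p (int p - k - int i) + int_choose p (int p - (k + 1) - int i)"
    by (simp_all add: int_choose_Suc algebra_simps)
  ultimately show ?thesis
    unfolding logR_cosh_term_def e_def[symmetric] cosh_def by (simp add: algebra_simps)
qed

lemma logR_cosh: "logR p k (cosh \<eta>) = (1/2^p) * (\<Sum>i\<le>p. real (p choose i) * logR_cosh_term \<eta> p k i)"
proof (induction p arbitrary: k)
  case 0
  then show ?case by (simp add: logR_cosh_term_def int_choose_def)
next
  case (Suc p)
  have "(1/2^Suc p) * (\<Sum>i\<le>Suc p. real (Suc p choose i) * logR_cosh_term \<eta> (Suc p) k i)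
      = (1/2^Suc p) * (\<Sum>i\<le>p. real (p choose i)
          * (logR_cosh_term \<eta> (Suc p) k i + logR_cosh_term \<eta> (Suc p) k (Suc i)))"
    by (simp only: sum_choose_Suc_weighted)
  also have "\<dots> = logR (Suc p) k (cosh \<eta>)"
    unfolding logR.simps logR_cosh_term_Suc Suc
    by (simp add: sum_distrib_left sum_divide_distrib sum.distrib algebra_simps)
  finally show ?case ..
qed

definition harm_choose_poly :: "nat \<Rightarrow> real \<Rightarrow> real" where
  "harm_choose_poly p s = (\<Sum>m\<le>p. real (p choose m) * harm (2*p - m) * s^m)"

definition alt_choose_div :: "nat \<Rightarrow> nat \<Rightarrow> real" where
  "alt_choose_div p i = (\<Sum>j\<in>{1..2*p}. (-1)^j * int_choose p (int j - int i) / real j)"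

lemma minus_one_powi_diff: "(-1::real) powi (int p - int j + 1) = (-1)^(p+1) * (-1)^j"
proof -
  have "(-1::real) powi (int p - int j + 1) = (-1) powi int (p + 1) / (-1) powi int j"
    by (subst power_int_diff[symmetric]) (simp_all add: algebra_simps)
  then show ?thesis by (simp add: power_int_of_nat field_simps minus_one_power_iff)
qed

lemma lhs_summand:
  "(-1) powi (int p - int j + 1) * exp (real_of_int (int p - int j) * \<eta>)
      * logR p (int p - int j) (cosh \<eta>) / (real p - real_of_int (int p - int j))
    = (1/2^p) * (-1)^(p+1) * (\<Sum>i\<le>p. real (p choose i) * exp (real_of_int (int p - 2 * int i) * \<eta>)
        * ((-1)^j * int_choose p (int j - int i) / real j))"
proof -
  have exps: "exp (real_of_int (int p - int j) * \<eta>) * exp (real_of_int (int j - 2 * int i) * \<eta>)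
      = exp (real_of_int (int p - 2 * int i) * \<eta>)" for i
    unfolding exp_add[symmetric] by (simp add: algebra_simps)
  have "int p - (int p - int j) = int j" by simp
  then have "logR p (int p - int j) (cosh \<eta>) = (1/2^p) * (\<Sum>i\<le>p. real (p choose i)
      * int_choose p (int j - int i) * exp (real_of_int (int j - 2 * int i) * \<eta>))"
    by (simp only: logR_cosh logR_cosh_term_def diff_diff_eq[symmetric] mult_2 mult.assoc)
  moreover have "real p - real_of_int (int p - int j) = real j" by simp
  ultimately have "(-1) powi (int p - int j + 1) * exp (real_of_int (int p - int j) * \<eta>)
      * logR p (int p - int j) (cosh \<eta>) / (real p - real_of_int (int p - int j))
    = (1/2^p) * (-1)^(p+1) * (\<Sum>i\<le>p. real (p choose i)
        * (exp (real_of_int (int p - int j) * \<eta>) * exp (real_of_int (int j - 2 * int i) * \<eta>))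
        * ((-1)^j * int_choose p (int j - int i) / real j))"
    unfolding minus_one_powi_diff by (simp add: sum_distrib_left sum_divide_distrib algebra_simps)
  then show ?thesis unfolding exps .
qed

lemma lhs_as_alt_choose_div:
  "(\<Sum>k\<in>{- int p .. int p - 1}.
      (-1) powi (k + 1) * exp (real_of_int k * \<eta>) * logR p k (cosh \<eta>) / (real p - real_of_int k))
   = (1/2^p) * (-1)^(p+1) * (\<Sum>i\<le>p. real (p choose i) * exp (real_of_int (int p - 2 * int i) * \<eta>)
        * alt_choose_div p i)"
proof -
  have "(\<Sum>k\<in>{- int p .. int p - 1}.
      (-1) powi (k + 1) * exp (real_of_int k * \<eta>) * logR p k (cosh \<eta>) / (real p - real_of_int k))
    = (\<Sum>j\<in>{1..2*p}. (-1) powi (int p - int j + 1) * exp (real_of_int (int p - int j) * \<eta>)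
        * logR p (int p - int j) (cosh \<eta>) / (real p - real_of_int (int p - int j)))"
    by (rule sum.reindex_bij_witness[where i="\<lambda>k. int p - int k" and j="\<lambda>k. nat (int p - k)"]) auto
  also have "\<dots> = (1/2^p) * (-1)^(p+1) * (\<Sum>j\<in>{1..2*p}. \<Sum>i\<le>p. real (p choose i)
      * exp (real_of_int (int p - 2 * int i) * \<eta>) * ((-1)^j * int_choose p (int j - int i) / real j))"
    by (simp only: lhs_summand sum_distrib_left)
  also have "\<dots> = (1/2^p) * (-1)^(p+1) * (\<Sum>i\<le>p. real (p choose i) * exp (real_of_int (int p - 2 * int i) * \<eta>)
        * alt_choose_div p i)"
    unfolding alt_choose_div_def by (subst sum.swap) (simp add: sum_distrib_left)
  finally show ?thesis .
qed

lemma sum_choose_alt_choose_div: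
  assumes "m \<le> p"
  shows "(\<Sum>i\<le>p. real ((p - m) choose i) * alt_choose_div p i) = - harm (2*p - m)"
proof -
  have "(\<Sum>i\<le>p. real ((p - m) choose i) * alt_choose_div p i)
      = (\<Sum>j\<in>{1..2*p}. (-1)^j / real j * (\<Sum>i\<le>p. real ((p - m) choose i) * int_choose p (int j - int i)))"
    unfolding alt_choose_div_def
    by (simp add: sum_distrib_left sum_distrib_right sum.swap[of _ "{..p}"] algebra_simps)
  also have "\<dots> = (\<Sum>j\<in>{1..2*p}. (-1)^j / real j * (\<Sum>i\<le>p - m. real ((p - m) choose i) * int_choose p (int j - int i)))"
    by (intro sum.cong refl arg_cong2[where f="(*)"] sum.mono_neutral_right) (auto simp: binomial_eq_0)
  also have "\<dots> = (\<Sum>j\<in>{1..2*p}. (-1)^j * real ((2*p - m) choose j) / real j)"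
    using assms by (simp add: vandermonde_int_choose mult_2 add.commute)
  also have "\<dots> = - harm (2*p - m)"
    by (rule sum_alternating_choose_div_le) simp
  finally show ?thesis .
qed

lemma sum_choose_power_alt_choose_div:
  "(\<Sum>i\<le>p. real (p choose i) * (1 + s)^(p - i) * alt_choose_div p i) = - harm_choose_poly p s"
proof -
  have "(\<Sum>i\<le>p. real (p choose i) * (1 + s)^(p - i) * alt_choose_div p i)
      = (\<Sum>i\<le>p. \<Sum>m\<le>p. real (p choose i) * real ((p - i) choose m) * s^m * alt_choose_div p i)"
    by (intro sum.cong refl) (simp add: binomial_ring_atMost[of _ p] sum_distrib_left sum_distrib_right algebra_simps)
  also have "\<dots> = (\<Sum>i\<le>p. \<Sum>m\<le>p. real (p choose m) * s^m * (real ((p - m) choose i) * alt_choose_div p i))"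
    by (intro sum.cong refl) (simp add: choose_mult_swap flip: of_nat_mult)
  also have "\<dots> = (\<Sum>m\<le>p. real (p choose m) * s^m * (\<Sum>i\<le>p. real ((p - m) choose i) * alt_choose_div p i))"
    by (subst sum.swap) (simp add: sum_distrib_left)
  also have "\<dots> = - harm_choose_poly p s"
    unfolding harm_choose_poly_def sum_negf[symmetric] by (intro sum.cong refl) (simp add: sum_choose_alt_choose_div)
  finally show ?thesis .
qed

lemma lhs_closed_form:
  "(\<Sum>k\<in>{- int p .. int p - 1}.
      (-1) powi (k + 1) * exp (real_of_int k * \<eta>) * logR p k (cosh \<eta>) / (real p - real_of_int k))
   = (1/2^p) * exp (- (real p * \<eta>)) * ((-1)^p * harm_choose_poly p (exp (2 * \<eta>) - 1))"
proof -
  have "exp (real_of_int (int p - 2 * int i) * \<eta>) = exp (- (real p * \<eta>)) * (1 + (exp (2 * \<eta>) - 1))^(p - i)"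
    if "i \<le> p" for i
    using that by (simp add: exp_of_nat_mult[symmetric] exp_add[symmetric] of_nat_diff algebra_simps)
  then have "(\<Sum>i\<le>p. real (p choose i) * exp (real_of_int (int p - 2 * int i) * \<eta>) * alt_choose_div p i)
      = exp (- (real p * \<eta>)) * (\<Sum>i\<le>p. real (p choose i) * (1 + (exp (2 * \<eta>) - 1))^(p - i) * alt_choose_div p i)"
    by (simp add: sum_distrib_left algebra_simps)
  then show ?thesis
    unfolding lhs_as_alt_choose_div sum_choose_power_alt_choose_div by simp
qed

section \<open>The right-hand side\<close>

lemma coeff_legendre_poly_ge:
  assumes "p \<le> n"
  shows "coeff (legendre_poly p) n = (if n = p then real ((2*p) choose p) / 2^p else 0)"
proof -
  have "coeff (legendre_poly p) n = (1 / 2^p) * (\<Sum>j\<le>p div 2.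
      if p - 2*j = n then (-1)^j * real (p choose j) * real ((2*p - 2*j) choose p) else 0)"
    by (simp add: legendre_poly_def coeff_sum)
  also have "\<dots> = (1 / 2^p) * (\<Sum>j\<le>p div 2. if j = 0 \<and> n = p then real ((2*p) choose p) else 0)"
    using assms by (intro arg_cong[where f="(*) _"] sum.cong refl) auto
  finally show ?thesis by (simp add: sum.delta)
qed

lemma higher_pderiv_legendre_poly: "(pderiv ^^ p) (legendre_poly p) = [: fact (2*p) / (2^p * fact p) :]"
proof (rule poly_eqI)
  fix n
  have "coeff ((pderiv ^^ p) (legendre_poly p)) n = (if n = 0 then fact p * real ((2*p) choose p) / 2^p else 0)"
    by (simp add: coeff_higher_pderiv coeff_legendre_poly_ge pochhammer_fact)
  also have "fact p * real ((2*p) choose p) = fact (2*p) / fact p"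
    by (simp add: binomial_fact field_simps)
  finally show "coeff ((pderiv ^^ p) (legendre_poly p)) n = coeff [: fact (2*p) / (2^p * fact p) :] n"
    by (simp add: coeff_pCons split: nat.split)
qed

lemma assoc_legendre_pp_coth:
  assumes "\<eta> > 0"
  shows "assoc_legendre_pp p (cosh \<eta> / sinh \<eta>) = fact (2*p) / (2^p * fact p) / sinh \<eta> ^ p"
proof -
  have sinh_pos: "sinh \<eta> > 0" using assms by simp
  have "(cosh \<eta> / sinh \<eta>)^2 - 1 = (1 / sinh \<eta>)^2"
    using sinh_pos cosh_square_eq[of \<eta>] by (simp add: field_simps power2_eq_square)
  also have "\<dots> = (1 / sinh \<eta>) powr (real 2)"
    using sinh_pos by (simp add: powr_realpow)
  finally have "((cosh \<eta> / sinh \<eta>)^2 - 1) powr (real p / 2) = (1 / sinh \<eta>) powr (real 2 * (real p / 2))"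
    by (simp only: powr_powr)
  then have "((cosh \<eta> / sinh \<eta>)^2 - 1) powr (real p / 2) = (1 / sinh \<eta>)^p"
    using sinh_pos by (simp add: powr_realpow)
  then show ?thesis
    unfolding assoc_legendre_pp_def higher_pderiv_legendre_poly by (simp add: power_one_over)
qed

lemma assoc_legendre_neg_coth:
  assumes "\<eta> > 0"
  shows "assoc_legendre_neg k p (cosh \<eta> / sinh \<eta>) =
     exp (- (real p * \<eta>)) / fact p * hyp2F1_term k (real k + 1) (1 + real p) (-1 / (exp (2 * \<eta>) - 1))"
proof -
  have sinh_pos: "sinh \<eta> > 0" using assms by simp
  have exp2: "exp (2 * \<eta>) = exp \<eta> * exp \<eta>" by (simp add: exp_add[symmetric])
  have "cosh \<eta> / sinh \<eta> - 1 = (cosh \<eta> - sinh \<eta>) / sinh \<eta>"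
      "cosh \<eta> / sinh \<eta> + 1 = (cosh \<eta> + sinh \<eta>) / sinh \<eta>"
    using sinh_pos by (simp_all add: field_simps)
  then have "(cosh \<eta> / sinh \<eta> - 1) / (cosh \<eta> / sinh \<eta> + 1) = (cosh \<eta> - sinh \<eta>) / (cosh \<eta> + sinh \<eta>)"
    using sinh_pos by simp
  also have "\<dots> = exp (-\<eta>) / exp \<eta>"
    by (simp add: cosh_minus_sinh cosh_plus_sinh)
  also have "\<dots> = exp (-2 * \<eta>)"
    by (simp add: exp_diff[symmetric])
  finally have ratio: "((cosh \<eta> / sinh \<eta> - 1) / (cosh \<eta> / sinh \<eta> + 1)) powr (real p / 2) = exp (- (real p * \<eta>))"
    by (simp add: exp_powr_real)
  have "exp \<eta> - exp (-\<eta>) \<noteq> 0" "exp \<eta> * exp \<eta> \<noteq> 1"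
    using sinh_pos assms by (simp_all add: sinh_def flip: exp2)
  then have arg: "(1 - cosh \<eta> / sinh \<eta>) / 2 = -1 / (exp (2 * \<eta>) - 1)"
    unfolding cosh_def sinh_def exp2 by (simp add: exp_minus field_simps)
  show ?thesis unfolding assoc_legendre_neg_def ratio arg by simp
qed

lemma power_hyp2F1_term:
  assumes "s \<noteq> 0" "k < p"
  shows "s^p * hyp2F1_term k (real k + 1) (1 + real p) (-1 / s)
     = (\<Sum>j\<le>p. hyper_numer j (real k) / (pochhammer (1 + real p) j * fact j) * s^(p - j))"
proof -
  have "s^p * (-1 / s)^j = (-1)^j * s^(p - j)" if "j \<le> p" for j
  proof -
    have "s^p = s^(p - j) * s^j" using that by (simp flip: power_add)
    moreover have "(-1 / s)^j = (-1)^j / s^j" by (rule power_divide)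
    ultimately show ?thesis using assms(1) by simp
  qed
  then have "s^p * hyp2F1_term k (real k + 1) (1 + real p) (-1 / s)
      = (\<Sum>j\<le>k. hyper_numer j (real k) / (pochhammer (1 + real p) j * fact j) * s^(p - j))"
    unfolding hyp2F1_term_def sum_distrib_left hyper_numer_def using assms(2)
    by (intro sum.cong refl) (simp add: algebra_simps)
  also have "\<dots> = (\<Sum>j\<le>p. hyper_numer j (real k) / (pochhammer (1 + real p) j * fact j) * s^(p - j))"
    using assms(2) by (intro sum.mono_neutral_left) (auto simp: hyper_numer_of_nat_eq_0)
  finally show ?thesis .
qed

lemma rhs_polynomial:
  assumes "s \<noteq> 0"
  shows "(-1)^p * harm (2*p) * (1 + s)^p
      + (\<Sum>k<p. legendre_weight p k * (s^p * hyp2F1_term k (real k + 1) (1 + real p) (-1 / s)))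
    = (-1)^p * harm_choose_poly p s"
proof -
  have "(\<Sum>k<p. legendre_weight p k * (s^p * hyp2F1_term k (real k + 1) (1 + real p) (-1 / s)))
      = (\<Sum>k<p. \<Sum>j\<le>p. legendre_weight p k * hyper_numer j (real k)
          * (s^(p - j) / (pochhammer (1 + real p) j * fact j)))"
  proof (intro sum.cong refl)
    fix k assume "k \<in> {..<p}"
    then have "k < p" by simp
    then show "legendre_weight p k * (s^p * hyp2F1_term k (real k + 1) (1 + real p) (-1 / s))
        = (\<Sum>j\<le>p. legendre_weight p k * hyper_numer j (real k) * (s^(p - j) / (pochhammer (1 + real p) j * fact j)))"
      unfolding power_hyp2F1_term[OF assms \<open>k < p\<close>] sum_distrib_left by (intro sum.cong refl) simp
  qed
  also have "\<dots> = (\<Sum>j\<le>p. (\<Sum>k<p. legendre_weight p k * hyper_numer j (real k))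
      * (s^(p - j) / (pochhammer (1 + real p) j * fact j)))"
    by (subst sum.swap) (simp add: sum_distrib_right sum_divide_distrib)
  also have "\<dots> = (\<Sum>j\<le>p. (-1)^(p+1) * (harm (2*p) - harm (p + j)) * real (p choose j) * s^(p - j))"
  proof (intro sum.cong refl)
    fix j assume "j \<in> {..p}"
    then have choose: "hyper_numer j (real p) / (pochhammer (1 + real p) j * fact j) = real (p choose j)"
      by (intro hyper_numer_of_nat_div) simp
    then show "(\<Sum>k<p. legendre_weight p k * hyper_numer j (real k)) * (s^(p - j) / (pochhammer (1 + real p) j * fact j))
        = (-1)^(p+1) * (harm (2*p) - harm (p + j)) * real (p choose j) * s^(p - j)"
      unfolding sum_legendre_weight_hyper_numer choose[symmetric] by (simp add: algebra_simps)
  qed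
  also have "\<dots> = (\<Sum>m\<le>p. (-1)^(p+1) * (harm (2*p) - harm (2*p - m)) * real (p choose m) * s^m)"
    by (rule sum.reindex_bij_witness[where i="\<lambda>m. p - m" and j="\<lambda>j. p - j"])
       (auto simp: binomial_symmetric[symmetric] intro!: arg_cong[where f=harm])
  finally have hyper_sum: "(\<Sum>k<p. legendre_weight p k * (s^p * hyp2F1_term k (real k + 1) (1 + real p) (-1 / s)))
      = (\<Sum>m\<le>p. (-1)^(p+1) * (harm (2*p) - harm (2*p - m)) * real (p choose m) * s^m)" .
  have binomial: "(1 + s)^p = (\<Sum>m\<le>p. real (p choose m) * s^m)"
    by (simp add: binomial_ring_atMost)
  show ?thesis
    unfolding hyper_sum binomial harm_choose_poly_def sum_distrib_left sum.distrib[symmetric]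
    by (intro sum.cong refl) (simp add: algebra_simps)
qed

lemma Digamma_of_nat_diff: "Digamma (real (n + 1)) - Digamma 1 = harm n"
  using Digamma_of_nat[of n, where 'a=real] Digamma_of_nat[of 0, where 'a=real] by (simp add: harm_def)

lemma sinh_power: "sinh \<eta> ^ p = exp (- (real p * \<eta>)) * (exp (2 * \<eta>) - 1)^p / 2^p"
proof -
  have "sinh \<eta> = exp (- \<eta>) * (exp (2 * \<eta>) - 1) / 2"
    by (simp add: sinh_def exp_minus exp_add[symmetric] field_simps)
  then have "sinh \<eta> ^ p = exp (- \<eta>) ^ p * (exp (2 * \<eta>) - 1)^p / 2^p"
    by (simp only: power_divide power_mult_distrib)
  then show ?thesis by (simp add: exp_of_nat_mult[symmetric])
qed

lemma rhs_closed_form: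
  assumes "\<eta> > 0"
  shows "fact p * exp (real p * \<eta>) * sinh \<eta> ^ p *
         ((-1) ^ p / fact (2 * p) * (Digamma (real (2 * p + 1)) - Digamma 1)
              * assoc_legendre_pp p (cosh \<eta> / sinh \<eta>)
          + (\<Sum>k<p. (-1) ^ k * real (2 * k + 1) / (real (p - k) * real (p + k + 1))
              * assoc_legendre_neg k p (cosh \<eta> / sinh \<eta>)))
    = (1/2^p) * exp (- (real p * \<eta>)) * ((-1)^p * harm_choose_poly p (exp (2 * \<eta>) - 1))"
proof -
  define s where "s = exp (2 * \<eta>) - 1"
  define F where "F k = hyp2F1_term k (real k + 1) (1 + real p) (-1 / s)" for k
  have "s > 0" using assms by (simp add: s_def)
  have "sinh \<eta> > 0" using assms by simp
  have exp_p: "exp (real p * \<eta>) = exp (- (real p * \<eta>)) * (1 + s)^p"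
    by (simp add: s_def exp_of_nat_mult[symmetric] exp_add[symmetric])
  have sinh_p: "sinh \<eta> ^ p = exp (- (real p * \<eta>)) * s^p / 2^p"
    unfolding s_def by (rule sinh_power)
  have pp_term: "fact p * exp (real p * \<eta>) * sinh \<eta> ^ p * ((-1) ^ p / fact (2 * p) * harm (2*p)
        * (fact (2*p) / (2^p * fact p) / sinh \<eta> ^ p))
      = (1/2^p) * exp (- (real p * \<eta>)) * ((-1)^p * harm (2*p) * (1 + s)^p)"
    using \<open>sinh \<eta> > 0\<close> unfolding exp_p by (simp add: field_simps)
  have neg_term: "fact p * exp (real p * \<eta>) * sinh \<eta> ^ p
        * (legendre_weight p k * (exp (- (real p * \<eta>)) / fact p * F k))
      = (1/2^p) * exp (- (real p * \<eta>)) * (legendre_weight p k * (s^p * F k))" for k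
  proof -
    have "exp (real p * \<eta>) * exp (- (real p * \<eta>)) = 1" by (simp flip: exp_add)
    then show ?thesis unfolding sinh_p by (simp add: field_simps)
  qed
  have "fact p * exp (real p * \<eta>) * sinh \<eta> ^ p *
         ((-1) ^ p / fact (2 * p) * (Digamma (real (2 * p + 1)) - Digamma 1)
              * assoc_legendre_pp p (cosh \<eta> / sinh \<eta>)
          + (\<Sum>k<p. (-1) ^ k * real (2 * k + 1) / (real (p - k) * real (p + k + 1))
              * assoc_legendre_neg k p (cosh \<eta> / sinh \<eta>)))
      = (1/2^p) * exp (- (real p * \<eta>)) * ((-1)^p * harm (2*p) * (1 + s)^p
          + (\<Sum>k<p. legendre_weight p k * (s^p * F k)))"
    unfolding Digamma_of_nat_diff assoc_legendre_pp_coth[OF assms] assoc_legendre_neg_coth[OF assms]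
      legendre_weight_def[symmetric] s_def[symmetric] F_def[symmetric]
      distrib_left sum_distrib_left pp_term neg_term ..
  also have "\<dots> = (1/2^p) * exp (- (real p * \<eta>)) * ((-1)^p * harm_choose_poly p s)"
    unfolding F_def rhs_polynomial[OF \<open>s > 0\<close>[THEN less_imp_neq, symmetric]] ..
  finally show ?thesis unfolding s_def .
qed

theorem mainTheorem4:
  fixes p :: nat and \<eta> :: real
  assumes "p \<ge> 1" and "\<eta> > 0"
  shows "(\<Sum>k\<in>{- int p .. int p - 1}.
            (-1) powi (k + 1) * exp (real_of_int k * \<eta>) * logR p k (cosh \<eta>) / (real p - real_of_int k))
       = fact p * exp (real p * \<eta>) * sinh \<eta> ^ p *
         ((-1) ^ p / fact (2 * p) * (Digamma (real (2 * p + 1)) - Digamma 1)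
              * assoc_legendre_pp p (cosh \<eta> / sinh \<eta>)
          + (\<Sum>k<p. (-1) ^ k * real (2 * k + 1) / (real (p - k) * real (p + k + 1))
              * assoc_legendre_neg k p (cosh \<eta> / sinh \<eta>)))"
  unfolding lhs_closed_form rhs_closed_form[OF \<open>\<eta> > 0\<close>] ..

end
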